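(* Let $L=2\pi\sqrt{7/3}$ and let $\mathcal A\varphi:=-\varphi'-\varphi'''$ on $D(\mathcal A):=\{\varphi\in H^3(0,L);\ \varphi(0)=\varphi(L)=\varphi'(L)=0\}$, considered on the complex space $L^2(0,L)$. Then \[ \sigma_p(\mathcal A)\cap i\mathbb R=\{\pm iq\},\qquad q=\frac{20}{21\sqrt{21}}, \] and the eigenfunctions of $\mathcal A$ associated with $\lambda=\pm iq$ are exactly $\varphi=C(\varphi_1\mp i\varphi_2)$, $C$ an arbitrary constant, where \[ \varphi_1(x)=\Theta\Big(\cos\tfrac{5x}{\sqrt{21}}-3\cos\tfrac{x}{\sqrt{21}}+2\cos\tfrac{4x}{\sqrt{21}}\Big),\quad \varphi_2(x)=\Theta\Big(-\sin\tfrac{5x}{\sqrt{21}}-3\sin\tfrac{x}{\sqrt{21}}+2\sin\tfrac{4x}{\sqrt{21}}\Big), \] with $\Theta:=\frac{1}{\sqrt{14\pi}}\left(\frac37\right)^{1/4}$.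
   Context: $\sigma_p(\mathcal A)$ denotes the set of eigenvalues of $\mathcal A$. *)

theory Defs
  imports "HOL-Analysis.Analysis"
begin

definition Lc :: real where "Lc = 2 * pi * sqrt (7/3)"

text \<open>Sobolev space H^3(0,L) for complex-valued functions: phi is (the continuous
representative of) an H^3 function on [0,L] with weak derivatives d1, d2, d3
iff d1, d2 are absolutely continuous primitives, d3 is in L^2(0,L), and
phi(x) = phi(0) + int_0^x d1, d1(x) = d1(0) + int_0^x d2, d2(x) = d2(0) + int_0^x d3
for all x in [0,L].\<close>
definition H3_derivs :: "real \<Rightarrow> (real \<Rightarrow> complex) \<Rightarrow> (real \<Rightarrow> complex) \<Rightarrow>
    (real \<Rightarrow> complex) \<Rightarrow> (real \<Rightarrow> complex) \<Rightarrow> bool" where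
  "H3_derivs L \<phi> d1 d2 d3 \<longleftrightarrow>
     set_integrable lborel {0..L} d1 \<and>
     set_integrable lborel {0..L} d2 \<and>
     set_integrable lborel {0..L} d3 \<and>
     set_integrable lborel {0..L} (\<lambda>x. complex_of_real ((cmod (d3 x))\<^sup>2)) \<and>
     (\<forall>x\<in>{0..L}.
        \<phi> x = \<phi> 0 + (LINT t:{0..x}|lborel. d1 t) \<and>
        d1 x = d1 0 + (LINT t:{0..x}|lborel. d2 t) \<and>
        d2 x = d2 0 + (LINT t:{0..x}|lborel. d3 t))"

text \<open>phi is an eigenfunction of A phi = -phi' - phi''' on
D(A) = {phi in H^3(0,L). phi(0) = phi(L) = phi'(L) = 0} with eigenvalue lam:
phi in D(A), phi nonzero (as a continuous function on [0,L]), and A phi = lam phi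
in L^2(0,L), i.e. almost everywhere on (0,L).\<close>
definition eigenfun_A :: "real \<Rightarrow> complex \<Rightarrow> (real \<Rightarrow> complex) \<Rightarrow> bool" where
  "eigenfun_A L lam \<phi> \<longleftrightarrow>
     (\<exists>d1 d2 d3. H3_derivs L \<phi> d1 d2 d3 \<and>
        \<phi> 0 = 0 \<and> \<phi> L = 0 \<and> d1 L = 0 \<and>
        (AE x in lborel. x \<in> {0..L} \<longrightarrow> - d1 x - d3 x = lam * \<phi> x)) \<and>
     (\<exists>x\<in>{0..L}. \<phi> x \<noteq> 0)"

definition point_spectrum_A :: "real \<Rightarrow> complex set" where
  "point_spectrum_A L = {lam. \<exists>\<phi>. eigenfun_A L lam \<phi>}"

definition Theta :: real where
  "Theta = 1 / sqrt (14 * pi) * (3/7) powr (1/4)"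

definition phi1 :: "real \<Rightarrow> real" where
  "phi1 x = Theta * (cos (5*x / sqrt 21) - 3 * cos (x / sqrt 21) + 2 * cos (4*x / sqrt 21))"

definition phi2 :: "real \<Rightarrow> real" where
  "phi2 x = Theta * (- sin (5*x / sqrt 21) - 3 * sin (x / sqrt 21) + 2 * sin (4*x / sqrt 21))"

definition qc :: real where "qc = 20 / (21 * sqrt 21)"

end

theory Submission
  imports Defs "HOL-Computational_Algebra.Fundamental_Theorem_Algebra"
begin

text \<open>An eigenfunction is a classical solution of \<open>\<phi>''' + \<phi>' + \<lambda>\<phi> = 0\<close> with
\<open>\<phi>(0) = \<phi>(L) = \<phi>'(L) = 0\<close>. For imaginary \<open>\<lambda>\<close> a conserved energy forces \<open>\<phi>'(0) = 0\<close> as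
well. For every root \<open>s\<close> of \<open>s\<^sup>3 + s = \<lambda>\<close> the quantity
\<open>e\<^sup>s\<^sup>x (\<phi>'' - s\<phi>' + (s\<^sup>2 + 1)\<phi>)\<close> is a first integral, so \<open>\<phi>''(0) = e\<^sup>s\<^sup>L \<phi>''(L)\<close>, and
\<open>\<phi>''(L) \<noteq> 0\<close> since \<open>\<phi> \<noteq> 0\<close>. Hence \<open>e\<^sup>a\<^sup>L = e\<^sup>b\<^sup>L = e\<^sup>c\<^sup>L\<close> for the three roots: they are
\<open>i\<alpha>, i\<beta>, i\<gamma>\<close> with \<open>\<surd>21(\<alpha> - \<beta>) = 3n\<close>, \<open>\<surd>21(\<beta> - \<gamma>) = 3m\<close>, and Vieta's relations become
\<open>m\<^sup>2 + mn + n\<^sup>2 = 7\<close>, whose integer solutions give \<open>\<lambda> = \<plusminus>iq\<close>. For \<open>\<lambda> = \<plusminus>iq\<close> the roots are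
\<open>c, 4c, -5c\<close> with \<open>c = \<plusminus>i/\<surd>21\<close>, and eliminating \<open>\<phi>'\<close>, \<open>\<phi>''\<close> from the three first
integrals expresses \<open>\<phi>\<close> as a multiple of \<open>e\<^sup>5\<^sup>c\<^sup>x - 3e\<^sup>-\<^sup>c\<^sup>x + 2e\<^sup>-\<^sup>4\<^sup>c\<^sup>x\<close>.\<close>

definition eigen_ode ::
    "real \<Rightarrow> complex \<Rightarrow> (real \<Rightarrow> complex) \<Rightarrow> (real \<Rightarrow> complex) \<Rightarrow> (real \<Rightarrow> complex) \<Rightarrow> bool" where
  "eigen_ode L lam \<phi> \<phi>' \<phi>'' \<longleftrightarrow> (\<forall>x\<in>{0..L}.
     (\<phi> has_vector_derivative \<phi>' x) (at x within {0..L}) \<and>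
     (\<phi>' has_vector_derivative \<phi>'' x) (at x within {0..L}) \<and>
     (\<phi>'' has_vector_derivative (- \<phi>' x - lam * \<phi> x)) (at x within {0..L}))"

lemma eigen_ode_derivs:
  assumes "eigen_ode L lam \<phi> \<phi>' \<phi>''" and "x \<in> {0..L}"
  shows "(\<phi> has_vector_derivative \<phi>' x) (at x within {0..L})"
    "(\<phi>' has_vector_derivative \<phi>'' x) (at x within {0..L})"
    "(\<phi>'' has_vector_derivative (- \<phi>' x - lam * \<phi> x)) (at x within {0..L})"
  using assms unfolding eigen_ode_def by auto

section \<open>Regularity of eigenfunctions\<close>

lemma lint_eq_integral_atLeastAtMost:
  fixes f :: "real \<Rightarrow> 'a::euclidean_space"
  assumes "set_integrable lborel {0..L} f" and "x \<in> {0..L}"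
  shows "(LINT t:{0..x}|lborel. f t) = integral {0..x} f"
proof -
  have "set_integrable lborel {0..x} f"
    by (rule set_integrable_subset[OF assms(1)]) (use assms(2) in auto)
  then show ?thesis by (rule set_borel_integral_eq_integral(2))
qed

lemma continuous_on_lint_primitive:
  fixes f :: "real \<Rightarrow> 'a::euclidean_space"
  assumes f: "set_integrable lborel {0..L} f"
    and g: "\<And>x. x \<in> {0..L} \<Longrightarrow> g x = c + (LINT t:{0..x}|lborel. f t)"
  shows "continuous_on {0..L} g"
proof -
  have "f integrable_on {0..L}" using set_borel_integral_eq_integral(1)[OF f] .
  then have "continuous_on {0..L} (\<lambda>x. c + integral {0..x} f)"
    by (intro continuous_intros indefinite_integral_continuous_1)
  then show ?thesis
    by (rule continuous_on_cong[THEN iffD1, rotated 2])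
      (simp_all add: g lint_eq_integral_atLeastAtMost[OF f])
qed

lemma has_vector_derivative_lint_primitive:
  fixes f :: "real \<Rightarrow> 'a::euclidean_space"
  assumes f: "continuous_on {0..L} f"
    and g: "\<And>x. x \<in> {0..L} \<Longrightarrow> g x = c + (LINT t:{0..x}|lborel. f t)"
    and x: "x \<in> {0..L}"
  shows "(g has_vector_derivative f x) (at x within {0..L})"
proof -
  have "((\<lambda>u. c + integral {0..u} f) has_vector_derivative f x) (at x within {0..L})"
    using integral_has_vector_derivative[OF f x] by (auto intro: derivative_eq_intros)
  then show ?thesis
    by (rule has_vector_derivative_transform[OF x, rotated])
      (simp add: g lint_eq_integral_atLeastAtMost[OF borel_integrable_atLeastAtMost'[OF f]])
qed

lemma lint_eq_diff_primitive:
  fixes f :: "real \<Rightarrow> 'a::euclidean_space"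
  assumes "\<And>t. t \<in> {a..b} \<Longrightarrow> (F has_vector_derivative f t) (at t within {a..b})"
    and "continuous_on {a..b} f" and "a \<le> b"
  shows "(LINT t:{a..b}|lborel. f t) = F b - F a"
  using set_borel_integral_eq_integral(2)[OF borel_integrable_atLeastAtMost'[OF assms(2)]]
    integral_unique[OF fundamental_theorem_of_calculus[OF assms(3) assms(1)]] by simp

lemma lint_cong_AE_continuous:
  fixes f g :: "real \<Rightarrow> 'a::euclidean_space"
  assumes f: "set_integrable lborel {0..L} f" and g: "continuous_on {0..L} g"
    and ae: "AE t in lborel. t \<in> {0..L} \<longrightarrow> f t = g t" and x: "x \<in> {0..L}"
  shows "(LINT t:{0..x}|lborel. f t) = (LINT t:{0..x}|lborel. g t)"
  unfolding set_lebesgue_integral_def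
proof (rule integral_cong_AE)
  have "set_integrable lborel {0..x} f"
    by (rule set_integrable_subset[OF f]) (use x in auto)
  then show "(\<lambda>t. indicator {0..x} t *\<^sub>R f t) \<in> borel_measurable lborel"
    unfolding set_integrable_def by auto
  have "set_integrable lborel {0..x} g"
    by (rule borel_integrable_atLeastAtMost') (rule continuous_on_subset[OF g], use x in auto)
  then show "(\<lambda>t. indicator {0..x} t *\<^sub>R g t) \<in> borel_measurable lborel"
    unfolding set_integrable_def by auto
  show "AE t in lborel. indicator {0..x} t *\<^sub>R f t = indicator {0..x} t *\<^sub>R g t"
    using ae by eventually_elim (use x in \<open>auto simp: indicator_def\<close>)
qed

lemma eigenfun_A_imp_eigen_ode:
  assumes "eigenfun_A L lam \<phi>"
  obtains \<phi>' \<phi>'' where "eigen_ode L lam \<phi> \<phi>' \<phi>''"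
    and "\<phi> 0 = 0" "\<phi> L = 0" "\<phi>' L = 0" and "\<exists>x\<in>{0..L}. \<phi> x \<noteq> 0"
proof -
  obtain d1 d2 d3 where H: "H3_derivs L \<phi> d1 d2 d3" and bd: "\<phi> 0 = 0" "\<phi> L = 0" "d1 L = 0"
    and ae: "AE x in lborel. x \<in> {0..L} \<longrightarrow> - d1 x - d3 x = lam * \<phi> x"
    and nz: "\<exists>x\<in>{0..L}. \<phi> x \<noteq> 0"
    using assms unfolding eigenfun_A_def by blast
  have i1: "set_integrable lborel {0..L} d1" and i2: "set_integrable lborel {0..L} d2"
    and i3: "set_integrable lborel {0..L} d3"
    and e0: "\<And>x. x \<in> {0..L} \<Longrightarrow> \<phi> x = \<phi> 0 + (LINT t:{0..x}|lborel. d1 t)"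
    and e1: "\<And>x. x \<in> {0..L} \<Longrightarrow> d1 x = d1 0 + (LINT t:{0..x}|lborel. d2 t)"
    and e2: "\<And>x. x \<in> {0..L} \<Longrightarrow> d2 x = d2 0 + (LINT t:{0..x}|lborel. d3 t)"
    using H unfolding H3_derivs_def by blast+
  have c1: "continuous_on {0..L} d1" by (rule continuous_on_lint_primitive[OF i2 e1])
  have c2: "continuous_on {0..L} d2" by (rule continuous_on_lint_primitive[OF i3 e2])
  define g where "g t = - d1 t - lam * \<phi> t" for t
  have cg: "continuous_on {0..L} g"
    unfolding g_def by (intro continuous_intros c1 continuous_on_lint_primitive[OF i1 e0])
  have ae': "AE t in lborel. t \<in> {0..L} \<longrightarrow> d3 t = g t"
    using ae by eventually_elim (auto simp: g_def algebra_simps)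
  \<comment> \<open>\<open>d3\<close> agrees a.e. with the continuous \<open>g\<close>, so \<open>d2\<close> is a \<open>C\<^sup>1\<close> primitive of \<open>g\<close>\<close>
  have e2': "d2 x = d2 0 + (LINT t:{0..x}|lborel. g t)" if "x \<in> {0..L}" for x
    using e2[OF that] lint_cong_AE_continuous[OF i3 cg ae' that] by simp
  have "eigen_ode L lam \<phi> d1 d2"
    unfolding eigen_ode_def
    using has_vector_derivative_lint_primitive[OF c1 e0] has_vector_derivative_lint_primitive[OF c2 e1]
      has_vector_derivative_lint_primitive[OF cg e2']
    by (simp add: g_def)
  then show ?thesis using that bd nz by blast
qed

section \<open>Conservation laws of the eigenvalue equation\<close>

lemma has_vector_derivative_exp_linear:
  fixes s :: complex
  shows "((\<lambda>x. exp (s * of_real x)) has_vector_derivative s * exp (s * of_real x)) (at x within S)"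
proof -
  have "((\<lambda>z. exp (s * z)) has_field_derivative s * exp (s * of_real x)) (at (of_real x))"
    by (auto intro!: derivative_eq_intros)
  then show ?thesis by (rule has_vector_derivative_real_field)
qed

lemma has_vector_derivative_zero_imp_eq_0:
  fixes g :: "real \<Rightarrow> 'a::real_normed_vector"
  assumes "\<And>x. x \<in> {0..L} \<Longrightarrow> (g has_vector_derivative 0) (at x within {0..L})"
    and "x \<in> {0..L}"
  shows "g x = g 0"
proof -
  obtain k where "\<And>y. y \<in> {0..L} \<Longrightarrow> g y = k"
    using has_vector_derivative_zero_constant[of "{0..L}" g] assms(1) by auto
  then show ?thesis using assms(2) by (cases "0 \<le> L") auto
qed

lemma eigen_ode_imaginary_deriv_0:
  assumes ode: "eigen_ode L (\<i> * of_real p) \<phi> \<phi>' \<phi>''" and "0 \<le> L"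
    and bd: "\<phi> 0 = 0" "\<phi> L = 0" "\<phi>' L = 0"
  shows "\<phi>' 0 = 0"
proof -
  \<comment> \<open>the energy \<open>2 Re(\<phi>'' \<phi>\<^sup>*) - |\<phi>'|\<^sup>2 + |\<phi>|\<^sup>2\<close> is conserved because \<open>\<lambda>\<close> is imaginary\<close>
  define Q where "Q x = \<phi>'' x * cnj (\<phi> x) + cnj (\<phi>'' x) * \<phi> x - \<phi>' x * cnj (\<phi>' x) + \<phi> x * cnj (\<phi> x)"
    for x
  have "(Q has_vector_derivative 0) (at x within {0..L})" if x: "x \<in> {0..L}" for x
  proof -
    note d = eigen_ode_derivs[OF ode x]
    have "(Q has_vector_derivative
        \<phi>'' x * cnj (\<phi>' x) + (- \<phi>' x - \<i> * of_real p * \<phi> x) * cnj (\<phi> x)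
        + (cnj (\<phi>'' x) * \<phi>' x + cnj (- \<phi>' x - \<i> * of_real p * \<phi> x) * \<phi> x)
        - (\<phi>' x * cnj (\<phi>'' x) + \<phi>'' x * cnj (\<phi>' x))
        + (\<phi> x * cnj (\<phi>' x) + \<phi>' x * cnj (\<phi> x))) (at x within {0..L})"
      unfolding Q_def
      by (intro has_vector_derivative_add has_vector_derivative_diff has_vector_derivative_mult
          has_vector_derivative_cnj d)
    then show ?thesis
      by (rule has_vector_derivative_eq_rhs) (simp add: algebra_simps)
  qed
  then have "Q L = Q 0" using \<open>0 \<le> L\<close> by (intro has_vector_derivative_zero_imp_eq_0) auto
  then show ?thesis by (simp add: Q_def bd)
qed

lemma eigen_ode_first_integral:
  assumes ode: "eigen_ode L lam \<phi> \<phi>' \<phi>''" and s: "s^3 + s = lam" and x: "x \<in> {0..L}"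
  shows "exp (s * of_real x) * (\<phi>'' x - s * \<phi>' x + (s^2 + 1) * \<phi> x)
    = \<phi>'' 0 - s * \<phi>' 0 + (s^2 + 1) * \<phi> 0"
proof -
  define G where "G x = exp (s * of_real x) * (\<phi>'' x - s * \<phi>' x + (s^2 + 1) * \<phi> x)" for x
  have "(G has_vector_derivative 0) (at y within {0..L})" if y: "y \<in> {0..L}" for y
  proof -
    note d = eigen_ode_derivs[OF ode y]
    have "((\<lambda>x. \<phi>'' x - s * \<phi>' x + (s^2 + 1) * \<phi> x) has_vector_derivative
        (- \<phi>' y - lam * \<phi> y) - s * \<phi>'' y + (s^2 + 1) * \<phi>' y) (at y within {0..L})"
      by (intro has_vector_derivative_add has_vector_derivative_diff
          has_vector_derivative_mult_right d)
    from has_vector_derivative_mult[OF has_vector_derivative_exp_linear this]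
    show ?thesis unfolding G_def
      by (rule has_vector_derivative_eq_rhs)
        (simp add: algebra_simps s[symmetric] power2_eq_square power3_eq_cube)
  qed
  then have "G x = G 0" using x by (intro has_vector_derivative_zero_imp_eq_0) auto
  then show ?thesis by (simp add: G_def)
qed

lemma eigen_ode_zero_initial:
  assumes ode: "eigen_ode L lam \<phi> \<phi>' \<phi>''"
    and init: "\<phi> 0 = 0" "\<phi>' 0 = 0" "\<phi>'' 0 = 0"
    and s: "s^3 + s = lam" "t^3 + t = lam" "s \<noteq> t"
    and x: "x \<in> {0..L}"
  shows "\<phi> x = 0"
proof -
  have \<phi>': "\<phi>' y = (s + t) * \<phi> y" if y: "y \<in> {0..L}" for y
  proof -
    have "(t - s) * (\<phi>' y - (s + t) * \<phi> y)
        = (\<phi>'' y - s * \<phi>' y + (s^2 + 1) * \<phi> y) - (\<phi>'' y - t * \<phi>' y + (t^2 + 1) * \<phi> y)"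
      by (simp add: algebra_simps power2_eq_square)
    also have "\<dots> = 0"
      using eigen_ode_first_integral[OF ode s(1) y] eigen_ode_first_integral[OF ode s(2) y] init
      by simp
    finally have "(t - s) * (\<phi>' y - (s + t) * \<phi> y) = 0" .
    then show ?thesis using s(3) by simp
  qed
  define K where "K y = exp (- (s + t) * of_real y) * \<phi> y" for y
  have "(K has_vector_derivative 0) (at y within {0..L})" if y: "y \<in> {0..L}" for y
    using has_vector_derivative_mult[OF has_vector_derivative_exp_linear eigen_ode_derivs(1)[OF ode y]]
    unfolding K_def by (rule has_vector_derivative_eq_rhs) (simp add: \<phi>'[OF y] algebra_simps)
  then have "K x = K 0" using x by (intro has_vector_derivative_zero_imp_eq_0) auto
  then show ?thesis by (simp add: K_def init)
qed

lemma depressed_cubic_roots: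
  fixes lam :: complex
  obtains a b c where "a^3 + a = lam" "b^3 + b = lam" "c^3 + c = lam"
    "a + b + c = 0" "a*b + b*c + c*a = 1" "a*b*c = lam" "a \<noteq> b \<or> b \<noteq> c"
proof -
  obtain a where "poly [:-lam, 1, 0, 1:] a = 0"
    using fundamental_theorem_of_algebra_alt[of "[:-lam, 1, 0, 1:]"] by auto
  then have a: "a^3 + a = lam" by (simp add: algebra_simps power3_eq_cube)
  define d where "d = csqrt (-3*a^2 - 4)"
  have d2: "d^2 = -3*a^2 - 4" unfolding d_def by simp
  define b where "b = (-a + d) / 2"
  define c where "c = (-a - d) / 2"
  have bc_sum: "b + c = -a" unfolding b_def c_def by (simp add: field_simps)
  have bc: "b*c = a^2 + 1" unfolding b_def c_def using d2 by (simp add: field_simps power2_eq_square)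
  have factor: "x^3 + x - lam = (x - a) * ((x - b) * (x - c))" for x
  proof -
    have "(x - b) * (x - c) = x^2 - (b + c) * x + b * c" by (simp add: algebra_simps power2_eq_square)
    also have "\<dots> = x^2 + a*x + a^2 + 1" using bc_sum bc by simp
    finally show ?thesis using a by (simp add: algebra_simps power2_eq_square power3_eq_cube)
  qed
  have root: "x^3 + x = lam" if "x = b \<or> x = c" for x
    using factor[of x] that by auto
  have sum: "a + b + c = 0" using bc_sum by (simp add: add.assoc)
  have "a*b + b*c + c*a = a*(b + c) + b*c" by (simp add: algebra_simps)
  also have "\<dots> = 1" using bc_sum bc by (simp add: power2_eq_square)
  finally have e2: "a*b + b*c + c*a = 1" .
  have e3: "a*b*c = lam" using bc a by (simp add: algebra_simps power2_eq_square power3_eq_cube)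
  have "a \<noteq> b \<or> b \<noteq> c"
  proof (rule ccontr)
    assume "\<not> (a \<noteq> b \<or> b \<noteq> c)"
    then have "d = b - c" "a = b" "b = c" unfolding b_def c_def by (auto simp: field_simps)
    then have "d = 0" "a = 0" using bc_sum by auto
    then show False using d2 by simp
  qed
  then show ?thesis using that[OF a root root sum e2 e3] by auto
qed

lemma binary_form_7_product:
  fixes m n :: int
  assumes "m^2 + m*n + n^2 = 7"
  shows "(m + 2*n) * (m - n) * (n + 2*m) \<in> {20, -20}"
proof -
  have "(2*m + n)^2 + 3*n^2 = 28" "(2*n + m)^2 + 3*m^2 = 28"
    using assms by (simp_all add: algebra_simps power2_eq_square)
  then have "n^2 \<le> 9" "m^2 \<le> 9" by (smt (verit) zero_le_power2)+
  then have "n \<in> {-3..3}" "m \<in> {-3..3}"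
    using abs_le_square_iff[of n 3] abs_le_square_iff[of m 3] by (auto simp: abs_le_iff)
  then have "n \<in> {-3, -2, -1, 0, 1, 2, 3}" "m \<in> {-3, -2, -1, 0, 1, 2, 3}" by auto
  then show ?thesis using assms by (auto simp: power2_eq_square)
qed

lemma exp_mult_of_real_eq:
  assumes "exp (x * of_real L) = exp (y * of_real L)" and "L > 0"
  shows "Re x = Re y" and "\<exists>n::int. (Im x - Im y) * L = 2 * pi * of_int n"
proof -
  obtain n :: int where n: "x * of_real L = y * of_real L + of_int (2 * n) * pi * \<i>"
    using assms(1) exp_eq by blast
  show "Re x = Re y" using arg_cong[OF n, of Re] assms(2) by simp
  have "(Im x - Im y) * L = 2 * pi * of_int n"
    using arg_cong[OF n, of Im] by (simp add: algebra_simps)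
  then show "\<exists>n::int. (Im x - Im y) * L = 2 * pi * of_int n" ..
qed

lemma Lc_eq: "Lc = 2 * pi * sqrt 21 / 3"
proof -
  have "sqrt (7/3) = sqrt 21 / 3"
    by (rule real_sqrt_unique) (auto simp: power_divide)
  then show ?thesis by (simp add: Lc_def)
qed

lemma Lc_pos: "Lc > 0"
  by (simp add: Lc_eq)

lemma mult_Lc_eq_2pi_int:
  assumes "u * Lc = 2 * pi * of_int n"
  shows "u * sqrt 21 = 3 * of_int n"
proof -
  have "2 * pi * (u * sqrt 21) = 2 * pi * (3 * of_int n)"
    using assms unfolding Lc_eq by (simp add: field_simps)
  then show ?thesis by simp
qed

section \<open>Imaginary eigenvalues\<close>

lemma eigen_ode_roots_exp_eq:
  assumes ode: "eigen_ode L (\<i> * of_real p) \<phi> \<phi>' \<phi>''" and "L > 0"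
    and bd: "\<phi> 0 = 0" "\<phi> L = 0" "\<phi>' L = 0" and nz: "\<exists>x\<in>{0..L}. \<phi> x \<noteq> 0"
    and s: "s^3 + s = \<i> * of_real p" and t: "t^3 + t = \<i> * of_real p"
  shows "exp (s * of_real L) = exp (t * of_real L)"
proof -
  have \<phi>'0: "\<phi>' 0 = 0" using eigen_ode_imaginary_deriv_0[OF ode] \<open>L > 0\<close> bd by simp
  have L: "L \<in> {0..L}" using \<open>L > 0\<close> by simp
  have \<phi>''0: "\<phi>'' 0 = exp (r * of_real L) * \<phi>'' L" if "r^3 + r = \<i> * of_real p" for r
    using eigen_ode_first_integral[OF ode that L] bd \<phi>'0 by simp
  have "\<phi>'' L \<noteq> 0"
  proof
    assume "\<phi>'' L = 0"
    then have "\<phi>'' 0 = 0" using \<phi>''0[OF s] by simp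
    obtain r1 r2 where "r1^3 + r1 = \<i> * of_real p" "r2^3 + r2 = \<i> * of_real p" "r1 \<noteq> r2"
      using depressed_cubic_roots[of "\<i> * of_real p"] by metis
    then show False
      using eigen_ode_zero_initial[OF ode bd(1) \<phi>'0 \<open>\<phi>'' 0 = 0\<close>] nz by blast
  qed
  then show ?thesis using \<phi>''0[OF s] \<phi>''0[OF t] by simp
qed

lemma imaginary_roots_product:
  fixes \<alpha> \<beta> \<gamma> :: real and m n :: int
  assumes sum: "\<alpha> + \<beta> + \<gamma> = 0" and e2: "\<alpha>*\<beta> + \<beta>*\<gamma> + \<gamma>*\<alpha> = -1"
    and n: "(\<alpha> - \<beta>) * sqrt 21 = 3 * of_int n" and m: "(\<beta> - \<gamma>) * sqrt 21 = 3 * of_int m"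
  shows "\<alpha> * \<beta> * \<gamma> \<in> {qc, -qc}"
proof -
  define r where "r = sqrt 21"
  have r: "r > 0" "r * r = 21" unfolding r_def by auto
  define A B G where "A = \<alpha> * r" and "B = \<beta> * r" and "G = \<gamma> * r"
  have "A - B = 3 * of_int n" "B - G = 3 * of_int m"
    using n m by (simp_all add: A_def B_def G_def r_def left_diff_distrib)
  moreover have "A + B + G = (\<alpha> + \<beta> + \<gamma>) * r" by (simp add: A_def B_def G_def distrib_right)
  then have "A + B + G = 0" using sum by simp
  ultimately have ABG: "A = of_int m + 2 * of_int n" "B = of_int m - of_int n"
      "G = - of_int n - 2 * of_int m"
    by linarith+
  have "-21 = (\<alpha>*\<beta> + \<beta>*\<gamma> + \<gamma>*\<alpha>) * (r * r)" using e2 r by simp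
  also have "\<dots> = A*B + B*G + G*A" by (simp add: A_def B_def G_def algebra_simps)
  also have "\<dots> = -3 * of_int (m^2 + m*n + n^2)"
    unfolding ABG by (simp add: algebra_simps power2_eq_square)
  finally have "of_int (m^2 + m*n + n^2) = (7::real)"
    by (simp del: of_int_add of_int_mult of_int_power)
  then have "m^2 + m*n + n^2 = 7" by (simp only: of_int_eq_numeral_iff)
  have "\<alpha> * \<beta> * \<gamma> * (21 * r) = \<alpha> * \<beta> * \<gamma> * (r * r * r)" using r by simp
  also have "\<dots> = A * B * G" by (simp add: A_def B_def G_def algebra_simps)
  also have "\<dots> = - of_int ((m + 2*n) * (m - n) * (n + 2*m))"
    unfolding ABG by (simp add: algebra_simps)
  finally have "\<alpha> * \<beta> * \<gamma> * (21 * r) = - of_int ((m + 2*n) * (m - n) * (n + 2*m))" .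
  with binary_form_7_product[OF \<open>m^2 + m*n + n^2 = 7\<close>]
  have "\<alpha> * \<beta> * \<gamma> * (21 * r) \<in> {20, -20}"
    by (auto simp del: of_int_mult of_int_add of_int_diff)
  then show ?thesis using r(1) by (auto simp: qc_def r_def field_simps)
qed

lemma imaginary_eigenvalue_cases:
  assumes eig: "eigenfun_A Lc lam \<phi>" and "Re lam = 0"
  shows "lam \<in> {\<i> * of_real qc, - \<i> * of_real qc}"
proof -
  define p where "p = Im lam"
  have lam: "lam = \<i> * of_real p" using \<open>Re lam = 0\<close> by (simp add: p_def complex_eq_iff)
  obtain \<phi>' \<phi>'' where ode: "eigen_ode Lc lam \<phi> \<phi>' \<phi>''"
    and bd: "\<phi> 0 = 0" "\<phi> Lc = 0" "\<phi>' Lc = 0" and nz: "\<exists>x\<in>{0..Lc}. \<phi> x \<noteq> 0"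
    using eigenfun_A_imp_eigen_ode[OF eig] by blast
  obtain a b c where roots: "a^3 + a = lam" "b^3 + b = lam" "c^3 + c = lam"
    and sum: "a + b + c = 0" and e2: "a*b + b*c + c*a = 1" and e3: "a*b*c = lam"
    using depressed_cubic_roots[of lam] by blast
  note roots_exp_eq = eigen_ode_roots_exp_eq[OF ode[unfolded lam] Lc_pos bd nz]
  have ab: "exp (a * of_real Lc) = exp (b * of_real Lc)"
    by (rule roots_exp_eq) (use roots lam in simp_all)
  have bc: "exp (b * of_real Lc) = exp (c * of_real Lc)"
    by (rule roots_exp_eq) (use roots lam in simp_all)
  have "Re a = Re b" "Re b = Re c" "Re a + Re b + Re c = 0"
    using exp_mult_of_real_eq(1)[OF ab Lc_pos] exp_mult_of_real_eq(1)[OF bc Lc_pos]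
      arg_cong[OF sum, of Re] by simp_all
  then have re0: "Re a = 0" "Re b = 0" "Re c = 0" by simp_all
  obtain n where n: "(Im a - Im b) * Lc = 2 * pi * of_int n"
    using exp_mult_of_real_eq(2)[OF ab Lc_pos] by blast
  obtain m where m: "(Im b - Im c) * Lc = 2 * pi * of_int m"
    using exp_mult_of_real_eq(2)[OF bc Lc_pos] by blast
  have "Im a + Im b + Im c = 0" using arg_cong[OF sum, of Im] by simp
  moreover have "Im a * Im b + Im b * Im c + Im c * Im a = -1"
    using arg_cong[OF e2, of Re] re0 by simp
  ultimately have "Im a * Im b * Im c \<in> {qc, -qc}"
    using mult_Lc_eq_2pi_int[OF n] mult_Lc_eq_2pi_int[OF m] by (rule imaginary_roots_product)
  moreover have "p = - (Im a * Im b * Im c)"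
    unfolding p_def using arg_cong[OF e3, of Im] re0 by simp
  ultimately have "p = qc \<or> p = - qc" by auto
  then show ?thesis unfolding lam by auto
qed

section \<open>Eigenfunctions built from the roots \<open>c, 4c, -5c\<close>\<close>

definition mode :: "complex \<Rightarrow> nat \<Rightarrow> real \<Rightarrow> complex" where
  "mode c j x = (5*c)^j * exp (5*c * of_real x) - 3 * (-c)^j * exp (-c * of_real x)
    + 2 * (-4*c)^j * exp (-4*c * of_real x)"

lemma mode_has_vector_derivative:
  "(mode c j has_vector_derivative mode c (Suc j) x) (at x within S)"
proof -
  have "(mode c j has_vector_derivative
      (5*c)^j * (5*c * exp (5*c * of_real x)) - 3 * (-c)^j * (-c * exp (-c * of_real x))
      + 2 * (-4*c)^j * (-4*c * exp (-4*c * of_real x))) (at x within S)"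
    unfolding mode_def[abs_def]
    by (intro has_vector_derivative_add has_vector_derivative_diff
        has_vector_derivative_mult_right has_vector_derivative_exp_linear)
  then show ?thesis by (rule has_vector_derivative_eq_rhs) (simp add: mode_def algebra_simps)
qed

lemma continuous_on_mode: "continuous_on S (mode c j)"
  by (rule continuous_at_imp_continuous_on)
    (auto intro: has_vector_derivative_continuous[OF mode_has_vector_derivative])

lemma mode_at_0: "mode c 0 0 = 0"
  by (simp add: mode_def)

lemma mode_at_period:
  assumes "exp (5*c * of_real L) = exp (-c * of_real L)"
    and "exp (-c * of_real L) = exp (-4*c * of_real L)"
  shows "mode c 0 L = 0" "mode c 1 L = 0"
  using assms by (simp_all add: mode_def algebra_simps)

lemma cube_eq_if_sq_eq:
  fixes c :: complex
  assumes "c * c = -1/21"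
  shows "c^3 = - c / 21"
  using assms by (simp add: power3_eq_cube)

lemma mode_roots:
  fixes c :: complex
  assumes "c * c = -1/21" and "s \<in> {c, 4*c, -5*c}"
  shows "s^3 + s = 20 * c / 21"
  using assms(2) by (auto simp: power_mult_distrib cube_eq_if_sq_eq[OF assms(1)] field_simps)

lemma mode_ode:
  assumes "c * c = -1/21"
  shows "- mode c 1 x - mode c 3 x = 20 * c / 21 * mode c 0 x"
proof -
  have root: "- r - r^3 = 20 * c / 21" if "- r \<in> {c, 4*c, -5*c}" for r
    using mode_roots[OF assms that] by (simp add: algebra_simps)
  have r5: "- (5*c) - (5*c)^3 = 20 * c / 21" and r1: "- (-c) - (-c)^3 = 20 * c / 21"
    and r4: "- (-4*c) - (-4*c)^3 = 20 * c / 21"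
    by (rule root; simp)+
  have "- mode c 1 x - mode c 3 x
      = (- (5*c) - (5*c)^3) * exp (5*c * of_real x) - 3 * (- (-c) - (-c)^3) * exp (-c * of_real x)
        + 2 * (- (-4*c) - (-4*c)^3) * exp (-4*c * of_real x)"
    unfolding mode_def by (simp add: algebra_simps)
  also have "\<dots> = 20 * c / 21 * mode c 0 x"
    unfolding r5 r1 r4 by (simp add: mode_def algebra_simps)
  finally show ?thesis .
qed

lemma eigenfun_A_mode:
  assumes c: "c * c = -1/21" and "0 \<le> L"
    and per: "exp (5*c * of_real L) = exp (-c * of_real L)"
      "exp (-c * of_real L) = exp (-4*c * of_real L)"
    and "K \<noteq> 0" and x0: "x0 \<in> {0..L}" "mode c 0 x0 \<noteq> 0"
    and \<phi>: "\<And>x. x \<in> {0..L} \<Longrightarrow> \<phi> x = K * mode c 0 x"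
  shows "eigenfun_A L (20 * c / 21) \<phi>"
proof -
  define d where "d j x = K * mode c j x" for j x
  have cont: "continuous_on S (d j)" for S j
    unfolding d_def by (intro continuous_intros continuous_on_mode)
  have lint: "(LINT t:{0..x}|lborel. d (Suc j) t) = d j x - d j 0" if "x \<in> {0..L}" for j x
    using that unfolding d_def
    by (intro lint_eq_diff_primitive has_vector_derivative_mult_right mode_has_vector_derivative
        continuous_intros continuous_on_mode) auto
  have "H3_derivs L \<phi> (d 1) (d 2) (d 3)"
    unfolding H3_derivs_def
  proof (intro conjI ballI borel_integrable_atLeastAtMost' continuous_intros cont)
    fix x assume x: "x \<in> {0..L}"
    show "\<phi> x = \<phi> 0 + (LINT t:{0..x}|lborel. d 1 t)"
    proof -
      have "\<phi> x = d 0 x" "\<phi> 0 = d 0 0" "d 0 0 = 0"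
        using \<phi> x \<open>0 \<le> L\<close> by (simp_all add: d_def mode_at_0)
      then show ?thesis using lint[OF x, of 0] by simp
    qed
    show "d 1 x = d 1 0 + (LINT t:{0..x}|lborel. d 2 t)"
      using lint[OF x, of 1] by (simp add: numeral_2_eq_2)
    show "d 2 x = d 2 0 + (LINT t:{0..x}|lborel. d 3 t)"
      using lint[OF x, of 2] by (simp add: numeral_2_eq_2 numeral_3_eq_3)
  qed
  moreover have "\<phi> 0 = 0" "\<phi> L = 0" "d 1 L = 0"
    using \<phi> \<open>0 \<le> L\<close> mode_at_period[OF per] by (simp_all add: d_def mode_at_0)
  moreover have "- d 1 x - d 3 x = 20 * c / 21 * \<phi> x" if "x \<in> {0..L}" for x
  proof -
    have "- d 1 x - d 3 x = K * (- mode c 1 x - mode c 3 x)" by (simp add: d_def algebra_simps)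
    also have "\<dots> = 20 * c / 21 * \<phi> x" unfolding mode_ode[OF c] \<phi>[OF that] by simp
    finally show ?thesis .
  qed
  moreover have "\<exists>x\<in>{0..L}. \<phi> x \<noteq> 0" using x0 \<phi> \<open>K \<noteq> 0\<close> by auto
  ultimately show ?thesis unfolding eigenfun_A_def by (blast intro: AE_I2)
qed

lemma eigen_ode_eq_mode:
  assumes c: "c * c = -1/21" and ode: "eigen_ode L (20 * c / 21) \<phi> \<phi>' \<phi>''"
    and init: "\<phi> 0 = 0" "\<phi>' 0 = 0" and x: "x \<in> {0..L}"
  shows "\<phi> x = - 7 / 18 * \<phi>'' 0 * mode c 0 x"
proof -
  have first_integral: "\<phi>'' x - s * \<phi>' x + (s^2 + 1) * \<phi> x = \<phi>'' 0 * exp (- s * of_real x)"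
    if "s \<in> {c, 4*c, -5*c}" for s
  proof -
    have "exp (s * of_real x) * (\<phi>'' x - s * \<phi>' x + (s^2 + 1) * \<phi> x) = \<phi>'' 0"
      using eigen_ode_first_integral[OF ode mode_roots[OF c that] x] init by simp
    then show ?thesis by (simp add: exp_minus field_simps)
  qed
  have i1: "\<phi>'' x - c * \<phi>' x + (c^2 + 1) * \<phi> x = \<phi>'' 0 * exp (- c * of_real x)"
    and i4: "\<phi>'' x - (4*c) * \<phi>' x + ((4*c)^2 + 1) * \<phi> x = \<phi>'' 0 * exp (- (4*c) * of_real x)"
    and i5: "\<phi>'' x - (-5*c) * \<phi>' x + ((-5*c)^2 + 1) * \<phi> x = \<phi>'' 0 * exp (- (-5*c) * of_real x)"
    by (rule first_integral; simp)+
  \<comment> \<open>the weights \<open>21, -14, -7\<close> are proportional to \<open>1 / ((s - s\<^sub>1)(s - s\<^sub>2))\<close> over the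
    three roots \<open>s\<close>; this combination eliminates \<open>\<phi>'\<close> and \<open>\<phi>''\<close>\<close>
  have "18 * \<phi> x = -378 * (c * c) * \<phi> x" using c by simp
  also have "\<dots> = 21 * (\<phi>'' x - c * \<phi>' x + (c^2 + 1) * \<phi> x)
      - 14 * (\<phi>'' x - (4*c) * \<phi>' x + ((4*c)^2 + 1) * \<phi> x)
      - 7 * (\<phi>'' x - (-5*c) * \<phi>' x + ((-5*c)^2 + 1) * \<phi> x)"
    by (simp add: algebra_simps power2_eq_square)
  also have "\<dots> = 18 * (- 7 / 18 * \<phi>'' 0 * mode c 0 x)"
    unfolding i1 i4 i5 by (simp add: mode_def algebra_simps)
  finally show ?thesis by (simp add: field_simps)
qed

lemma eigenfun_A_imp_mode:
  assumes c: "c * c = -1/21" "Re c = 0" and "0 \<le> L" and eig: "eigenfun_A L (20 * c / 21) \<phi>"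
  obtains B where "B \<noteq> 0" and "\<And>x. x \<in> {0..L} \<Longrightarrow> \<phi> x = B * mode c 0 x"
proof -
  obtain \<phi>' \<phi>'' where ode: "eigen_ode L (20 * c / 21) \<phi> \<phi>' \<phi>''"
    and bd: "\<phi> 0 = 0" "\<phi> L = 0" "\<phi>' L = 0" and nz: "\<exists>x\<in>{0..L}. \<phi> x \<noteq> 0"
    using eigenfun_A_imp_eigen_ode[OF eig] by blast
  have "20 * c / 21 = \<i> * of_real (20 * Im c / 21)"
    using c(2) by (simp add: complex_eq_iff)
  then have \<phi>'0: "\<phi>' 0 = 0"
    using eigen_ode_imaginary_deriv_0 ode \<open>0 \<le> L\<close> bd by metis
  have "\<phi>'' 0 \<noteq> 0"
  proof
    assume "\<phi>'' 0 = 0"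
    have "c^3 + c = 20 * c / 21" "(4*c)^3 + 4*c = 20 * c / 21"
      by (rule mode_roots[OF c(1)]; simp)+
    moreover have "c \<noteq> 4 * c" using c(1) by auto
    ultimately show False
      using eigen_ode_zero_initial[OF ode bd(1) \<phi>'0 \<open>\<phi>'' 0 = 0\<close>] nz by blast
  qed
  then show ?thesis
    using that[of "- 7 / 18 * \<phi>'' 0"] eigen_ode_eq_mode[OF c(1) ode bd(1) \<phi>'0] by simp
qed

section \<open>The critical roots \<open>c = \<plusminus>i/\<surd>21\<close>\<close>

definition base_root :: "int \<Rightarrow> complex" where
  "base_root \<sigma> = \<i> * of_real (of_int \<sigma> / sqrt 21)"

lemma base_root_sq:
  assumes "\<sigma> \<in> {1, -1}"
  shows "base_root \<sigma> * base_root \<sigma> = -1/21"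
  using assms by (auto simp: base_root_def simp flip: of_real_mult)

lemma Re_base_root: "Re (base_root \<sigma>) = 0"
  by (simp add: base_root_def)

lemma base_root_eigenvalue: "20 * base_root \<sigma> / 21 = \<i> * of_real (of_int \<sigma> * qc)"
  by (simp add: base_root_def qc_def field_simps)

lemma exp_base_root_Lc:
  "exp (5 * base_root \<sigma> * of_real Lc) = exp (- base_root \<sigma> * of_real Lc)"
  "exp (- base_root \<sigma> * of_real Lc) = exp (-4 * base_root \<sigma> * of_real Lc)"
proof -
  define T where "T = 2 * pi * of_int \<sigma> / 3"
  have "base_root \<sigma> * of_real Lc = \<i> * (of_real (of_int \<sigma> / sqrt 21) * of_real Lc)"
    by (simp add: base_root_def)
  also have "(of_real (of_int \<sigma> / sqrt 21) * of_real Lc :: complex)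
      = of_real (of_int \<sigma> / sqrt 21 * Lc)"
    by (simp only: of_real_mult)
  also have "of_int \<sigma> / sqrt 21 * Lc = T" by (simp add: Lc_eq T_def)
  finally have cL: "base_root \<sigma> * of_real Lc = \<i> * of_real T" .
  have 5: "5 * base_root \<sigma> * of_real Lc = 5 * (\<i> * of_real T)"
    and 1: "- base_root \<sigma> * of_real Lc = - (\<i> * of_real T)"
    and 4: "-4 * base_root \<sigma> * of_real Lc = -4 * (\<i> * of_real T)"
    by (simp_all only: mult.assoc cL mult_minus_left)
  show "exp (5 * base_root \<sigma> * of_real Lc) = exp (- base_root \<sigma> * of_real Lc)"
    unfolding 5 1 exp_eq by (rule exI[of _ "2 * \<sigma>"]) (simp add: complex_eq_iff T_def)
  show "exp (- base_root \<sigma> * of_real Lc) = exp (-4 * base_root \<sigma> * of_real Lc)"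
    unfolding 1 4 exp_eq by (rule exI[of _ \<sigma>]) (simp add: complex_eq_iff T_def)
qed

lemma phi_eq_mode:
  assumes "\<sigma> \<in> {1, -1}"
  shows "of_real (phi1 x) - \<i> * of_int \<sigma> * of_real (phi2 x)
    = of_real Theta * mode (base_root \<sigma>) 0 x"
  using assms
  by (auto intro!: complex_eqI
      simp: mode_def base_root_def phi1_def phi2_def Re_exp Im_exp algebra_simps)

lemma phi1_peak: "phi1 (pi * sqrt 21 / 2) = 2 * Theta"
proof -
  have "5 * pi / 2 = pi / 2 + 2 * pi" by simp
  then have "cos (5 * pi / 2) = 0" by (simp only: cos_periodic cos_pi_half)
  then show ?thesis by (simp add: phi1_def)
qed

lemma mode_base_root_peak:
  assumes "\<sigma> \<in> {1, -1}"
  shows "mode (base_root \<sigma>) 0 (pi * sqrt 21 / 2) \<noteq> 0"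
proof
  assume "mode (base_root \<sigma>) 0 (pi * sqrt 21 / 2) = 0"
  then have "phi1 (pi * sqrt 21 / 2) = 0"
    using arg_cong[OF phi_eq_mode[OF assms, of "pi * sqrt 21 / 2"], of Re] by simp
  then show False by (simp add: phi1_peak Theta_def)
qed

lemma eigenfun_A_iff_phi:
  assumes \<sigma>: "\<sigma> \<in> {1, -1}"
  shows "eigenfun_A Lc (\<i> * of_real (of_int \<sigma> * qc)) \<phi> \<longleftrightarrow>
    (\<exists>C. C \<noteq> 0 \<and>
      (\<forall>x\<in>{0..Lc}. \<phi> x = C * (of_real (phi1 x) - \<i> * of_int \<sigma> * of_real (phi2 x))))"
    (is "_ \<longleftrightarrow> (\<exists>C. C \<noteq> 0 \<and> (\<forall>x\<in>{0..Lc}. \<phi> x = C * ?\<psi> x))")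
proof -
  let ?c = "base_root \<sigma>"
  have \<Theta>: "of_real Theta \<noteq> (0::complex)" by (simp add: Theta_def)
  have \<psi>: "?\<psi> x = of_real Theta * mode ?c 0 x" for x by (rule phi_eq_mode[OF \<sigma>])
  have peak: "pi * sqrt 21 / 2 \<in> {0..Lc}" by (simp add: Lc_eq)
  show ?thesis
    unfolding base_root_eigenvalue[symmetric]
  proof
    assume "eigenfun_A Lc (20 * ?c / 21) \<phi>"
    then obtain B where "B \<noteq> 0" "\<And>x. x \<in> {0..Lc} \<Longrightarrow> \<phi> x = B * mode ?c 0 x"
      using eigenfun_A_imp_mode[OF base_root_sq[OF \<sigma>] Re_base_root] Lc_pos by (metis less_le)
    then show "\<exists>C. C \<noteq> 0 \<and> (\<forall>x\<in>{0..Lc}. \<phi> x = C * ?\<psi> x)"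
      using \<Theta> by (intro exI[of _ "B / of_real Theta"]) (simp add: \<psi>)
  next
    assume "\<exists>C. C \<noteq> 0 \<and> (\<forall>x\<in>{0..Lc}. \<phi> x = C * ?\<psi> x)"
    then obtain C where "C \<noteq> 0" "\<And>x. x \<in> {0..Lc} \<Longrightarrow> \<phi> x = (C * of_real Theta) * mode ?c 0 x"
      unfolding \<psi> by (auto simp: mult.assoc)
    then show "eigenfun_A Lc (20 * ?c / 21) \<phi>"
      using Lc_pos \<Theta>
      by (intro eigenfun_A_mode[where K = "C * of_real Theta", OF base_root_sq[OF \<sigma>] _
            exp_base_root_Lc _ peak mode_base_root_peak[OF \<sigma>]])
        (auto simp: mult.assoc)
  qed
qed

theorem lemma2p3:
  shows "point_spectrum_A Lc \<inter> {z. Re z = 0} = {\<i> * of_real qc, - \<i> * of_real qc} \<and>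
    (\<forall>\<phi>. eigenfun_A Lc (\<i> * of_real qc) \<phi> \<longleftrightarrow>
           (\<exists>C::complex. C \<noteq> 0 \<and>
              (\<forall>x\<in>{0..Lc}. \<phi> x = C * (of_real (phi1 x) - \<i> * of_real (phi2 x))))) \<and>
    (\<forall>\<phi>. eigenfun_A Lc (- \<i> * of_real qc) \<phi> \<longleftrightarrow>
           (\<exists>C::complex. C \<noteq> 0 \<and>
              (\<forall>x\<in>{0..Lc}. \<phi> x = C * (of_real (phi1 x) + \<i> * of_real (phi2 x)))))"
proof -
  have plus: "eigenfun_A Lc (\<i> * of_real qc) \<phi> \<longleftrightarrow>
      (\<exists>C. C \<noteq> 0 \<and> (\<forall>x\<in>{0..Lc}. \<phi> x = C * (of_real (phi1 x) - \<i> * of_real (phi2 x))))" for \<phi>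
    using eigenfun_A_iff_phi[of 1 \<phi>] by simp
  have minus: "eigenfun_A Lc (- \<i> * of_real qc) \<phi> \<longleftrightarrow>
      (\<exists>C. C \<noteq> 0 \<and> (\<forall>x\<in>{0..Lc}. \<phi> x = C * (of_real (phi1 x) + \<i> * of_real (phi2 x))))" for \<phi>
    using eigenfun_A_iff_phi[of "-1" \<phi>] by simp
  have "{\<i> * of_real qc, - \<i> * of_real qc} \<subseteq> point_spectrum_A Lc"
    using plus[of "\<lambda>x. of_real (phi1 x) - \<i> * of_real (phi2 x)"]
      minus[of "\<lambda>x. of_real (phi1 x) + \<i> * of_real (phi2 x)"]
    unfolding point_spectrum_A_def by (auto intro!: exI[of _ 1])
  moreover have "point_spectrum_A Lc \<inter> {z. Re z = 0} \<subseteq> {\<i> * of_real qc, - \<i> * of_real qc}"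
    using imaginary_eigenvalue_cases unfolding point_spectrum_A_def by blast
  ultimately show ?thesis using plus minus by auto
qed

end
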